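(* Let $K$ be a field, $m\ge2$, $d_1,\ldots,d_m$ positive integers, and let $I_2(D)\subset S=K[x_1,\ldots,x_m,y_1,\ldots,y_m]$ be the ideal generated by the $2$-minors of the matrix $D=\begin{pmatrix}x_1^{d_1}&\cdots&x_m^{d_m}\\ y_1^{d_1}&\cdots&y_m^{d_m}\end{pmatrix}$. Then $\mathrm{bar}(I_2(D))=\frac{m(m-1)}{2}$.
   Context: $\mathrm{bar}(I)$ denotes the binomial arithmetical rank: the least integer $s$ such that there exist binomials $B_1,\ldots,B_s\in I$ with $\mathrm{rad}(I)=\mathrm{rad}(B_1,\ldots,B_s)$. *)

theory Defs
  imports Main "HOL-Library.Poly_Mapping"
begin

text \<open>Variable x_i is numbered 2*i,
  variable y_i is numbered 2*i+1, for i in {1..m}.\<close>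

type_synonym 'a mpoly = "(nat \<Rightarrow>\<^sub>0 nat) \<Rightarrow>\<^sub>0 'a"

definition Var :: "nat \<Rightarrow> 'a::comm_ring_1 mpoly" where
  "Var v = Poly_Mapping.single (Poly_Mapping.single v 1) 1"

definition xv :: "nat \<Rightarrow> 'a::comm_ring_1 mpoly" where "xv i = Var (2 * i)"
definition yv :: "nat \<Rightarrow> 'a::comm_ring_1 mpoly" where "yv i = Var (2 * i + 1)"

definition Vars :: "nat \<Rightarrow> nat set" where
  "Vars m = {2 * i | i. 1 \<le> i \<and> i \<le> m} \<union> {2 * i + 1 | i. 1 \<le> i \<and> i \<le> m}"

definition Sring :: "nat \<Rightarrow> 'a::comm_ring_1 mpoly set" where
  "Sring m = {p :: 'a mpoly. \<forall>mon \<in> Poly_Mapping.keys p. Poly_Mapping.keys mon \<subseteq> Vars m}"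

definition gen_ideal :: "nat \<Rightarrow> 'a::comm_ring_1 mpoly set \<Rightarrow> 'a mpoly set" where
  "gen_ideal m G = {p. \<exists>F c. finite F \<and> F \<subseteq> G \<and> (\<forall>g\<in>F. c g \<in> Sring m)
                          \<and> p = (\<Sum>g\<in>F. c g * g)}"

definition rad :: "nat \<Rightarrow> 'a::comm_ring_1 mpoly set \<Rightarrow> 'a mpoly set" where
  "rad m J = {p \<in> Sring m. \<exists>n. p ^ n \<in> J}"

definition binomial :: "'a::comm_ring_1 mpoly \<Rightarrow> bool" where
  "binomial p \<longleftrightarrow> card (Poly_Mapping.keys p) \<le> 2"

definition bar :: "nat \<Rightarrow> 'a::comm_ring_1 mpoly set \<Rightarrow> nat" where
  "bar m I = (LEAST s. \<exists>B :: nat \<Rightarrow> 'a mpoly.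
       (\<forall>i<s. B i \<in> I \<and> binomial (B i)) \<and> rad m I = rad m (gen_ideal m (B ` {..<s})))"

definition minor2 :: "(nat \<Rightarrow> nat) \<Rightarrow> nat \<Rightarrow> nat \<Rightarrow> 'a::comm_ring_1 mpoly" where
  "minor2 d i j = xv i ^ d i * yv j ^ d j - xv j ^ d j * yv i ^ d i"

definition I2D :: "nat \<Rightarrow> (nat \<Rightarrow> nat) \<Rightarrow> 'a::comm_ring_1 mpoly set" where
  "I2D m d = gen_ideal m {minor2 d i j | i j. 1 \<le> i \<and> i < j \<and> j \<le> m}"

end

theory Submission
  imports Defs
begin

text \<open>The minors themselves are m(m-1)/2 binomials generating I_2(D), which gives the upper
  bound.  For the lower bound, fix an ordered pair i \<noteq> j and substitute 0 for every variable
  except x_i and y_j.  This ring homomorphism kills I_2(D), but not the minor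
  x_i^{d_i} y_j^{d_j} - x_j^{d_j} y_i^{d_i}, whose image is the monomial x_i^{d_i} y_j^{d_j}.
  Hence every family of binomials with the same radical contains one with a term in the
  variables x_i, y_j only, and that term is not univariate since all members of I_2(D) vanish
  when all but one variable are set to 0.  Distinct ordered pairs share at most one variable,
  so these terms are pairwise distinct: the m(m-1) ordered pairs need m(m-1) terms, and s
  binomials have at most 2s.\<close>

lemma keys_plus_nat: "Poly_Mapping.keys (a + b :: 'b \<Rightarrow>\<^sub>0 nat) = Poly_Mapping.keys a \<union> Poly_Mapping.keys b"
  by (auto simp: in_keys_iff lookup_add)

lemma poly_mapping_sum_single_lookup:
  "p = (\<Sum>k\<in>Poly_Mapping.keys p. Poly_Mapping.single k (Poly_Mapping.lookup p k))"
proof (rule poly_mapping_eqI)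
  fix x
  show "Poly_Mapping.lookup p x = Poly_Mapping.lookup (\<Sum>k\<in>Poly_Mapping.keys p. Poly_Mapping.single k (Poly_Mapping.lookup p k)) x"
    unfolding lookup_sum lookup_single
    by (cases "x \<in> Poly_Mapping.keys p") (auto simp: when_def in_keys_iff)
qed

subsection \<open>Substituting zero for the variables outside a set\<close>

definition restrict_vars :: "nat set \<Rightarrow> 'a::comm_ring_1 mpoly \<Rightarrow> 'a mpoly" where
  "restrict_vars A = Poly_Mapping.mapp (\<lambda>mon c. if Poly_Mapping.keys mon \<subseteq> A then c else 0)"

lemma lookup_restrict_vars:
  "Poly_Mapping.lookup (restrict_vars A p) mon = (if Poly_Mapping.keys mon \<subseteq> A then Poly_Mapping.lookup p mon else 0)"
  by (auto simp: restrict_vars_def lookup_mapp when_def in_keys_iff)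

lemma restrict_vars_single:
  "restrict_vars A (Poly_Mapping.single mon c) =
     (if Poly_Mapping.keys mon \<subseteq> A then Poly_Mapping.single mon c else 0)"
  by (rule poly_mapping_eqI) (auto simp: lookup_restrict_vars lookup_single when_def)

lemma restrict_vars_zero: "restrict_vars A 0 = 0"
  by (rule poly_mapping_eqI) (simp add: lookup_restrict_vars)

lemma restrict_vars_one: "restrict_vars A 1 = 1"
  by (rule poly_mapping_eqI) (auto simp: lookup_restrict_vars lookup_one when_def)

lemma restrict_vars_add: "restrict_vars A (p + q) = restrict_vars A p + restrict_vars A q"
  by (rule poly_mapping_eqI) (simp add: lookup_restrict_vars lookup_add)

lemma restrict_vars_diff: "restrict_vars A (p - q) = restrict_vars A p - restrict_vars A q"
  by (rule poly_mapping_eqI) (simp add: lookup_restrict_vars lookup_minus)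

lemma restrict_vars_sum: "restrict_vars A (sum f S) = (\<Sum>x\<in>S. restrict_vars A (f x))"
  by (induction S rule: infinite_finite_induct) (auto simp: restrict_vars_zero restrict_vars_add)

text \<open>Multiplicativity comes down to monomials, where it holds because the support of a
  product of monomials is the union of their supports.\<close>

lemma restrict_vars_mult: "restrict_vars A (p * q) = restrict_vars A p * restrict_vars A q"
proof -
  let ?P = "Poly_Mapping.keys p" and ?Q = "Poly_Mapping.keys q"
  let ?t = "\<lambda>p k. Poly_Mapping.single k (Poly_Mapping.lookup p k)"
  have terms: "restrict_vars A (?t p a * ?t q b) = restrict_vars A (?t p a) * restrict_vars A (?t q b)"
    for a b by (simp add: mult_single restrict_vars_single keys_plus_nat)
  have "restrict_vars A (p * q) = restrict_vars A ((\<Sum>a\<in>?P. ?t p a) * (\<Sum>b\<in>?Q. ?t q b))"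
    by (subst poly_mapping_sum_single_lookup[of p], subst poly_mapping_sum_single_lookup[of q])
      (rule refl)
  also have "\<dots> = (\<Sum>a\<in>?P. \<Sum>b\<in>?Q. restrict_vars A (?t p a) * restrict_vars A (?t q b))"
    by (simp add: sum_distrib_left sum_distrib_right restrict_vars_sum terms sum.swap[of _ ?P])
  also have "\<dots> = restrict_vars A (\<Sum>a\<in>?P. ?t p a) * restrict_vars A (\<Sum>b\<in>?Q. ?t q b)"
    by (simp add: sum_distrib_left sum_distrib_right restrict_vars_sum sum.swap[of _ ?P])
  also have "\<dots> = restrict_vars A p * restrict_vars A q"
    by (subst (3) poly_mapping_sum_single_lookup[of p], subst (3) poly_mapping_sum_single_lookup[of q])
      (rule refl)
  finally show ?thesis .
qed

lemma restrict_vars_power: "restrict_vars A (p ^ n) = restrict_vars A p ^ n"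
  by (induction n) (auto simp: restrict_vars_one restrict_vars_mult)

lemma restrict_vars_gen_ideal:
  assumes "p \<in> gen_ideal m G" and "\<And>g. g \<in> G \<Longrightarrow> restrict_vars A g = 0"
  shows "restrict_vars A p = 0"
proof -
  from assms(1) obtain F c where "F \<subseteq> G" "p = (\<Sum>g\<in>F. c g * g)"
    unfolding gen_ideal_def by blast
  then show ?thesis
    using assms(2) by (auto simp: restrict_vars_sum restrict_vars_mult intro!: sum.neutral)
qed

lemma restrict_vars_rad_gen_ideal:
  fixes p :: "'a::idom mpoly"
  assumes "p \<in> rad m (gen_ideal m G)" and "restrict_vars A p \<noteq> 0"
  shows "\<exists>g\<in>G. restrict_vars A g \<noteq> 0"
proof -
  from assms(1) obtain n where "p ^ n \<in> gen_ideal m G"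
    unfolding rad_def by blast
  moreover have "restrict_vars A (p ^ n) \<noteq> 0"
    using assms(2) by (simp add: restrict_vars_power)
  ultimately show ?thesis
    using restrict_vars_gen_ideal by blast
qed

definition cross_monomial :: "(nat \<Rightarrow> nat) \<Rightarrow> nat \<Rightarrow> nat \<Rightarrow> (nat \<Rightarrow>\<^sub>0 nat)" where
  "cross_monomial d i j = Poly_Mapping.single (2 * i) (d i) + Poly_Mapping.single (2 * j + 1) (d j)"

lemma Var_power: "(Var v :: 'a::comm_ring_1 mpoly) ^ k = Poly_Mapping.single (Poly_Mapping.single v k) 1"
  by (induction k) (simp_all add: Var_def mult_single single_add[symmetric])

lemma minor2_eq_cross_monomials:
  "(minor2 d i j :: 'a::comm_ring_1 mpoly) =
     Poly_Mapping.single (cross_monomial d i j) 1 - Poly_Mapping.single (cross_monomial d j i) 1"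
  by (simp add: minor2_def xv_def yv_def Var_power mult_single cross_monomial_def)

lemma keys_minor2:
  "Poly_Mapping.keys (minor2 d i j :: 'a::comm_ring_1 mpoly) \<subseteq> {cross_monomial d i j, cross_monomial d j i}"
  unfolding minor2_eq_cross_monomials using keys_diff by fastforce

lemma keys_cross_monomial:
  "d i > 0 \<Longrightarrow> d j > 0 \<Longrightarrow> Poly_Mapping.keys (cross_monomial d i j) = {2 * i, 2 * j + 1}"
  by (auto simp: cross_monomial_def keys_plus_nat)

lemma binomial_minor2: "binomial (minor2 d i j :: 'a::comm_ring_1 mpoly)"
proof -
  have "card (Poly_Mapping.keys (minor2 d i j :: 'a mpoly)) \<le> card {cross_monomial d i j, cross_monomial d j i}"
    by (rule card_mono[OF _ keys_minor2]) simp
  also have "\<dots> \<le> 2"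
    by (simp add: card_insert_le_m1)
  finally show ?thesis
    unfolding binomial_def .
qed

lemma minor2_in_Sring:
  assumes "i \<in> {1..m}" "j \<in> {1..m}" "d i > 0" "d j > 0"
  shows "(minor2 d i j :: 'a::comm_ring_1 mpoly) \<in> Sring m"
proof -
  have "Poly_Mapping.keys (cross_monomial d i j) \<subseteq> Vars m"
       "Poly_Mapping.keys (cross_monomial d j i) \<subseteq> Vars m"
    using assms by (auto simp: keys_cross_monomial Vars_def)
  then show ?thesis
    unfolding Sring_def using keys_minor2 by blast
qed

lemma units_in_Sring: "(1::'a::comm_ring_1 mpoly) \<in> Sring m" "(-1::'a::comm_ring_1 mpoly) \<in> Sring m"
  unfolding Sring_def by auto

lemma minor2_in_I2D:
  assumes "i \<in> {1..m}" "j \<in> {1..m}" "i \<noteq> j"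
  shows "(minor2 d i j :: 'a::comm_ring_1 mpoly) \<in> I2D m d"
proof (cases "i < j")
  case True
  then show ?thesis
    unfolding I2D_def gen_ideal_def using assms
    by (intro CollectI exI[of _ "{minor2 d i j}"] exI[of _ "\<lambda>_. 1"]) (auto simp: units_in_Sring)
next
  case False
  with assms(3) have "j < i"
    by simp
  moreover have "(minor2 d i j :: 'a mpoly) = (-1) * minor2 d j i"
    by (simp add: minor2_def)
  ultimately show ?thesis
    unfolding I2D_def gen_ideal_def using assms
    by (intro CollectI exI[of _ "{minor2 d j i}"] exI[of _ "\<lambda>_. -1"]) (auto simp: units_in_Sring)
qed

lemma restrict_vars_I2D_single_var:
  assumes "\<forall>i\<in>{1..m}. d i > 0" and "p \<in> I2D m d"
  shows "restrict_vars {v} (p :: 'a::comm_ring_1 mpoly) = 0"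
  using assms(2) unfolding I2D_def
proof (rule restrict_vars_gen_ideal, safe)
  fix i j assume "1 \<le> i" "i < j" "j \<le> m"
  then have "d i > 0" "d j > 0"
    using assms(1) by auto
  then have "\<not> Poly_Mapping.keys (cross_monomial d i j) \<subseteq> {v}"
            "\<not> Poly_Mapping.keys (cross_monomial d j i) \<subseteq> {v}"
    by (auto simp: keys_cross_monomial) presburger+
  then show "restrict_vars {v} (minor2 d i j :: 'a mpoly) = 0"
    by (simp add: minor2_eq_cross_monomials restrict_vars_diff restrict_vars_single)
qed

lemma restrict_vars_minor2:
  assumes "d i > 0" "d j > 0" "i \<noteq> j"
  shows "restrict_vars {2 * i, 2 * j + 1} (minor2 d i j :: 'a::comm_ring_1 mpoly) =
           Poly_Mapping.single (cross_monomial d i j) 1"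
  using assms
  by (simp add: minor2_eq_cross_monomials restrict_vars_diff restrict_vars_single keys_cross_monomial)

definition offdiag_pairs :: "nat \<Rightarrow> (nat \<times> nat) set" where
  "offdiag_pairs m = {(i, j). i \<in> {1..m} \<and> j \<in> {1..m} \<and> i \<noteq> j}"

lemma card_offdiag_pairs: "card (offdiag_pairs m) = m * (m - 1)"
proof -
  have "offdiag_pairs m = {1..m} \<times> {1..m} - (\<lambda>i. (i, i)) ` {1..m}"
    unfolding offdiag_pairs_def by auto
  moreover have "card ((\<lambda>i. (i, i)) ` {1..m}) = m"
    by (subst card_image) (auto simp: inj_on_def)
  moreover have "card ({1..m} \<times> {1..m} - (\<lambda>i. (i, i)) ` {1..m}) =
                  card ({1..m} \<times> {1..m::nat}) - card ((\<lambda>i. (i, i)) ` {1..m})"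
    by (rule card_Diff_subset) auto
  ultimately have "card (offdiag_pairs m) = m * m - m"
    by (simp add: card_cartesian_product)
  then show ?thesis
    by (simp add: diff_mult_distrib2)
qed

lemma card_upper_pairs: "card {(i, j). 1 \<le> i \<and> i < j \<and> j \<le> (m::nat)} = m * (m - 1) div 2"
proof -
  define U where "U = {(i, j). 1 \<le> i \<and> i < j \<and> j \<le> m}"
  have "finite U"
    unfolding U_def by (rule finite_subset[of _ "{0..m} \<times> {0..m}"]) auto
  moreover have "offdiag_pairs m = U \<union> prod.swap ` U" "U \<inter> prod.swap ` U = {}"
    unfolding U_def offdiag_pairs_def by auto
  ultimately have "card (offdiag_pairs m) = card U + card (prod.swap ` U)"
    by (simp add: card_Un_disjoint)
  also have "card (prod.swap ` U) = card U"
    by (rule card_image) simp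
  finally have "m * (m - 1) = 2 * card U"
    by (simp add: card_offdiag_pairs)
  then show ?thesis
    unfolding U_def by simp
qed

lemma I2D_rad_generator_cross_term:
  fixes B :: "nat \<Rightarrow> 'a::idom mpoly"
  assumes "\<forall>i\<in>{1..m}. d i > 0"
    and "rad m (I2D m d) = rad m (gen_ideal m (B ` {..<s}))"
    and "(i, j) \<in> offdiag_pairs m"
  shows "\<exists>k<s. \<exists>mon\<in>Poly_Mapping.keys (B k). Poly_Mapping.keys mon \<subseteq> {2 * i, 2 * j + 1}"
proof -
  have ij: "i \<in> {1..m}" "j \<in> {1..m}" "i \<noteq> j"
    using assms(3) unfolding offdiag_pairs_def by auto
  with assms(1) have d: "d i > 0" "d j > 0"
    by auto
  let ?A = "{2 * i, 2 * j + 1}"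
  have "(minor2 d i j :: 'a mpoly) \<in> rad m (I2D m d)"
    unfolding rad_def using minor2_in_Sring[OF ij(1,2) d] minor2_in_I2D[OF ij]
    by (auto intro!: exI[of _ 1])
  then have "(minor2 d i j :: 'a mpoly) \<in> rad m (gen_ideal m (B ` {..<s}))"
    using assms(2) by simp
  moreover have "restrict_vars ?A (minor2 d i j :: 'a mpoly) \<noteq> 0"
    unfolding restrict_vars_minor2[OF d ij(3)] by (metis lookup_single_eq lookup_zero zero_neq_one)
  ultimately obtain k where k: "k < s" "restrict_vars ?A (B k) \<noteq> 0"
    by (blast dest: restrict_vars_rad_gen_ideal)
  then obtain mon where "Poly_Mapping.lookup (restrict_vars ?A (B k)) mon \<noteq> 0"
    by (metis poly_mapping_eqI lookup_zero)
  then have "mon \<in> Poly_Mapping.keys (B k)" "Poly_Mapping.keys mon \<subseteq> ?A"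
    by (auto simp: lookup_restrict_vars in_keys_iff split: if_splits)
  with k(1) show ?thesis
    by blast
qed

lemma I2D_term_not_single_var:
  assumes "\<forall>i\<in>{1..m}. d i > 0" "p \<in> I2D m d" "mon \<in> Poly_Mapping.keys (p :: 'a::comm_ring_1 mpoly)"
  shows "\<not> Poly_Mapping.keys mon \<subseteq> {v}"
  using restrict_vars_I2D_single_var[OF assms(1,2), of v] assms(3)
  by (metis lookup_restrict_vars lookup_zero in_keys_iff)

lemma inter_cross_support:
  fixes i j i' j' :: nat
  assumes "(i, j) \<noteq> (i', j')"
  shows "{2 * i, 2 * j + 1} \<inter> {2 * i', 2 * j' + 1} \<subseteq> (if i = i' then {2 * i} else {2 * j + 1})"
  using assms by auto presburger+

text \<open>Choosing for each ordered pair a generator and one of its terms supported on the pair's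
  two variables gives an injection into the terms of the generators.\<close>

lemma I2D_rad_binomial_generators_lower_bound:
  fixes B :: "nat \<Rightarrow> 'a::idom mpoly"
  assumes dpos: "\<forall>i\<in>{1..m}. d i > 0"
    and B: "\<forall>k<s. B k \<in> I2D m d \<and> binomial (B k)"
    and rad_eq: "rad m (I2D m d) = rad m (gen_ideal m (B ` {..<s}))"
  shows "m * (m - 1) \<le> 2 * s"
proof -
  define support where "support = (\<lambda>(i::nat, j::nat). {2 * i, 2 * j + 1})"
  define Terms where "Terms = Sigma {..<s} (\<lambda>k. Poly_Mapping.keys (B k))"
  have "\<exists>t\<in>Terms. Poly_Mapping.keys (snd t) \<subseteq> support p" if "p \<in> offdiag_pairs m" for p
  proof -
    obtain i j where "p = (i, j)"
      by fastforce
    with that obtain k mon where "k < s" "mon \<in> Poly_Mapping.keys (B k)"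
        "Poly_Mapping.keys mon \<subseteq> {2 * i, 2 * j + 1}"
      using I2D_rad_generator_cross_term[OF dpos rad_eq] by blast
    with \<open>p = (i, j)\<close> show ?thesis
      unfolding Terms_def support_def by force
  qed
  then obtain f where f: "\<forall>p\<in>offdiag_pairs m. f p \<in> Terms \<and> Poly_Mapping.keys (snd (f p)) \<subseteq> support p"
    by metis
  have "inj_on f (offdiag_pairs m)"
  proof (rule inj_onI, rule ccontr)
    fix p q
    assume pq: "p \<in> offdiag_pairs m" "q \<in> offdiag_pairs m" "f p = f q" "p \<noteq> q"
    obtain i j i' j' where ij: "p = (i, j)" "q = (i', j')"
      by fastforce
    define v where "v = (if i = i' then 2 * i else 2 * j + 1)"
    have "support p \<inter> support q \<subseteq> {v}"
      using inter_cross_support[of i j i' j'] pq(4) unfolding ij support_def v_def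
      by (cases "i = i'") simp_all
    moreover have "Poly_Mapping.keys (snd (f p)) \<subseteq> support p \<inter> support q"
      using f pq by (metis Int_subset_iff)
    moreover have "fst (f p) < s" "snd (f p) \<in> Poly_Mapping.keys (B (fst (f p)))"
      using f pq(1) unfolding Terms_def by (auto simp: mem_Times_iff)
    ultimately show False
      using I2D_term_not_single_var[OF dpos] B by blast
  qed
  then have "m * (m - 1) = card (f ` offdiag_pairs m)"
    by (simp add: card_image card_offdiag_pairs)
  also have "\<dots> \<le> card Terms"
    using f unfolding Terms_def by (intro card_mono) auto
  also have "\<dots> = (\<Sum>k<s. card (Poly_Mapping.keys (B k)))"
    unfolding Terms_def by (simp add: card_SigmaI)
  also have "\<dots> \<le> (\<Sum>k<s. 2)"
    using B by (intro sum_mono) (auto simp: binomial_def)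
  finally show ?thesis
    by simp
qed

lemma I2D_rad_binomial_generators_minors:
  "\<exists>B :: nat \<Rightarrow> 'a::comm_ring_1 mpoly.
     (\<forall>k<m * (m - 1) div 2. B k \<in> I2D m d \<and> binomial (B k)) \<and>
     rad m (I2D m d) = rad m (gen_ideal m (B ` {..<m * (m - 1) div 2}))"
proof -
  define U where "U = {(i, j). 1 \<le> i \<and> i < j \<and> j \<le> m}"
  have "finite U"
    unfolding U_def by (rule finite_subset[of _ "{0..m} \<times> {0..m}"]) auto
  then obtain h where h: "bij_betw h {..<card U} U"
    using ex_bij_betw_nat_finite lessThan_atLeast0 by metis
  define B where "B = (\<lambda>(i, j). minor2 d i j :: 'a mpoly) \<circ> h"
  have "B ` {..<card U} = (\<lambda>(i, j). minor2 d i j) ` U"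
    unfolding B_def image_comp[symmetric] bij_betw_imp_surj_on[OF h] ..
  also have "\<dots> = {minor2 d i j | i j. 1 \<le> i \<and> i < j \<and> j \<le> m}"
    unfolding U_def by auto
  finally have generators: "B ` {..<card U} = {minor2 d i j | i j. 1 \<le> i \<and> i < j \<and> j \<le> m}" .
  have "\<forall>k<card U. B k \<in> I2D m d \<and> binomial (B k)"
  proof (intro allI impI conjI)
    fix k assume "k < card U"
    then show "B k \<in> I2D m d"
      unfolding I2D_def gen_ideal_def generators[symmetric]
      by (auto intro!: exI[of _ "{B k}"] exI[of _ "\<lambda>_. 1"] simp: units_in_Sring)
    show "binomial (B k)"
      unfolding B_def by (simp add: case_prod_beta binomial_minor2)
  qed
  moreover have "gen_ideal m (B ` {..<card U}) = I2D m d"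
    unfolding generators I2D_def ..
  ultimately show ?thesis
    unfolding U_def card_upper_pairs by metis
qed

theorem theorem4p8:
  fixes m :: nat and d :: "nat \<Rightarrow> nat"
  assumes "m \<ge> 2" and "\<forall>i\<in>{1..m}. d i > 0"
  shows "bar m (I2D m d :: 'a::field mpoly set) = m * (m - 1) div 2"
  unfolding bar_def
proof (rule Least_equality)
  show "\<exists>B :: nat \<Rightarrow> 'a mpoly. (\<forall>k<m * (m - 1) div 2. B k \<in> I2D m d \<and> binomial (B k)) \<and>
          rad m (I2D m d) = rad m (gen_ideal m (B ` {..<m * (m - 1) div 2}))"
    by (rule I2D_rad_binomial_generators_minors)
next
  fix s
  assume "\<exists>B :: nat \<Rightarrow> 'a mpoly. (\<forall>k<s. B k \<in> I2D m d \<and> binomial (B k)) \<and>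
            rad m (I2D m d) = rad m (gen_ideal m (B ` {..<s}))"
  then have "m * (m - 1) \<le> 2 * s"
    using I2D_rad_binomial_generators_lower_bound[OF assms(2)] by blast
  then show "m * (m - 1) div 2 \<le> s"
    by simp
qed

end
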